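(* Let $I\subseteq\mathbb{R}$ be an interval. If $(p_\lambda)_{\lambda\in I}$ and $(q_\lambda)_{\lambda\in I}$ are increasing nets of projections in an abelian $AW^*$-algebra, then $$\bigwedge_{\lambda\in I}(p_\lambda\vee q_\lambda)=\Big(\bigwedge_{\lambda\in I}p_\lambda\Big)\vee\Big(\bigwedge_{\mu\in I}q_\mu\Big).$$
   Context: An $AW^*$-algebra is a C*-algebra $\mathcal{M}$ such that for every nonempty $S\subseteq\mathcal{M}$ there is a projection $p$ with $\{x\in\mathcal{M}: sx=0\ \forall s\in S\}=p\mathcal{M}$; its projections form a complete lattice under the Löwner order, with lattice operations $\vee,\wedge$. A net $(p_\lambda)_{\lambda\in I}$ is increasing if $p_\lambda\le p_\mu$ whenever $\lambda\le\mu$. *)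

theory Defs
  imports "HOL-Analysis.Analysis"
begin

text \<open>A complex C*-algebra is modelled on a type 'a carrying a real Banach algebra
structure (type classes), together with an explicit complex scalar multiplication
sc and an involution st, subject to the usual axioms.\<close>

definition cstar_algebra ::
  "(complex \<Rightarrow> 'a::{real_normed_algebra,banach} \<Rightarrow> 'a) \<Rightarrow> ('a \<Rightarrow> 'a) \<Rightarrow> bool" where
  "cstar_algebra sc st \<longleftrightarrow>
     (\<forall>r x. sc (complex_of_real r) x = r *\<^sub>R x) \<and>
     (\<forall>c d x. sc (c + d) x = sc c x + sc d x) \<and>
     (\<forall>c x y. sc c (x + y) = sc c x + sc c y) \<and>
     (\<forall>c d x. sc (c * d) x = sc c (sc d x)) \<and>
     (\<forall>c x y. sc c (x * y) = sc c x * y \<and> sc c (x * y) = x * sc c y) \<and>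
     (\<forall>c x. norm (sc c x) = cmod c * norm x) \<and>
     (\<forall>x. st (st x) = x) \<and>
     (\<forall>x y. st (x + y) = st x + st y) \<and>
     (\<forall>c x. st (sc c x) = sc (cnj c) (st x)) \<and>
     (\<forall>x y. st (x * y) = st y * st x) \<and>
     (\<forall>x. norm (st x * x) = (norm x)\<^sup>2)"

definition is_projection :: "('a::{real_normed_algebra} \<Rightarrow> 'a) \<Rightarrow> 'a \<Rightarrow> bool" where
  "is_projection st p \<longleftrightarrow> st p = p \<and> p * p = p"

definition aw_star_algebra ::
  "(complex \<Rightarrow> 'a::{real_normed_algebra,banach} \<Rightarrow> 'a) \<Rightarrow> ('a \<Rightarrow> 'a) \<Rightarrow> bool" where
  "aw_star_algebra sc st \<longleftrightarrow> cstar_algebra sc st \<and>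
     (\<forall>S::'a set. S \<noteq> {} \<longrightarrow>
        (\<exists>p. is_projection st p \<and> {x. \<forall>s\<in>S. s * x = 0} = {p * y | y. True}))"

definition abelian_aw_star_algebra ::
  "(complex \<Rightarrow> 'a::{real_normed_algebra,banach} \<Rightarrow> 'a) \<Rightarrow> ('a \<Rightarrow> 'a) \<Rightarrow> bool" where
  "abelian_aw_star_algebra sc st \<longleftrightarrow> aw_star_algebra sc st \<and> (\<forall>x y::'a. x * y = y * x)"

definition loewner_le :: "('a::{real_normed_algebra} \<Rightarrow> 'a) \<Rightarrow> 'a \<Rightarrow> 'a \<Rightarrow> bool" where
  "loewner_le st a b \<longleftrightarrow> (\<exists>y. b - a = st y * y)"

definition is_proj_glb :: "('a::{real_normed_algebra} \<Rightarrow> 'a) \<Rightarrow> 'a set \<Rightarrow> 'a \<Rightarrow> bool" where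
  "is_proj_glb st S p \<longleftrightarrow> is_projection st p \<and> (\<forall>s\<in>S. loewner_le st p s) \<and>
     (\<forall>r. is_projection st r \<and> (\<forall>s\<in>S. loewner_le st r s) \<longrightarrow> loewner_le st r p)"

definition is_proj_lub :: "('a::{real_normed_algebra} \<Rightarrow> 'a) \<Rightarrow> 'a set \<Rightarrow> 'a \<Rightarrow> bool" where
  "is_proj_lub st S p \<longleftrightarrow> is_projection st p \<and> (\<forall>s\<in>S. loewner_le st s p) \<and>
     (\<forall>r. is_projection st r \<and> (\<forall>s\<in>S. loewner_le st s r) \<longrightarrow> loewner_le st p r)"

definition proj_Inf :: "('a::{real_normed_algebra} \<Rightarrow> 'a) \<Rightarrow> 'a set \<Rightarrow> 'a" where
  "proj_Inf st S = (THE p. is_proj_glb st S p)"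

definition proj_sup :: "('a::{real_normed_algebra} \<Rightarrow> 'a) \<Rightarrow> 'a \<Rightarrow> 'a \<Rightarrow> 'a" where
  "proj_sup st p q = (THE r. is_proj_lub st {p, q} r)"

end

theory Submission
  imports Defs
begin

text \<open>
  In a commutative C*-algebra the Loewner order between projections p, q is just p q = p.
  The nontrivial half of this says that no nonzero projection g has the form - v^* v:
  writing v = h + i k with h, k self-adjoint gives h^2 + k^2 = - g, and for 0 < t < 1
  a square root b of g + t k^2 (found by Banach's fixed point theorem) satisfies
  b^2 + t h^2 = (1 - t) g, so the estimate \<parallel>x\<parallel>^2 \<le> \<parallel>x^2 + y^2\<parallel> for self-adjoint x, y
  forces t \<parallel>h\<parallel>^2 \<le> 1 - t, i.e. h = 0, and then g^2 + k^2 = 0 forces g = 0.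

  Consequently the projections form a Boolean algebra with p \<squnion> q = p + q - p q and complements
  1 - p, and in an AW*-algebra the infimum of a family is the support of the right annihilator
  of the complements. If r \<le> p_\<lambda> \<squnion> q_\<lambda> for all \<lambda>, then r (1 - p_\<lambda>) (1 - q_\<mu>) = 0 for all \<lambda>, \<mu>,
  because both complements lie below those at min \<lambda> \<mu>; passing to the infimum first over \<lambda> and
  then over \<mu> gives r \<le> (\<Sqinter>p) \<squnion> (\<Sqinter>q).
\<close>

lemma le_0_if_mult_le_1_minus:
  fixes x :: real
  assumes "\<And>t. 0 < t \<Longrightarrow> t < 1 \<Longrightarrow> t * x \<le> 1 - t"
  shows "x \<le> 0"
proof (rule ccontr)
  assume "\<not> x \<le> 0"
  then have x: "0 < x" "0 < 2 + x"
    by simp_all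
  define t where "t = 2 / (2 + x)"
  have "0 < t" "t < 1"
    using x by (simp_all add: t_def field_simps)
  then have "t * x \<le> 1 - t"
    by (rule assms)
  then show False
    using x mult_pos_pos[OF x(1) x(1)] by (simp add: t_def field_simps)
qed

section \<open>Commutative C*-algebras\<close>

locale commutative_cstar =
  fixes sc :: "complex \<Rightarrow> 'a::{real_normed_algebra,banach} \<Rightarrow> 'a" and st :: "'a \<Rightarrow> 'a"
  assumes cstar_algebra: "cstar_algebra sc st"
    and mult_commute: "(x::'a) * y = y * x"
begin

lemma mult_left_commute: "(x::'a) * (y * z) = y * (x * z)"
  by (simp only: mult.assoc[symmetric] mult_commute[of x y])

lemma st_st [simp]: "st (st x) = x"
  using cstar_algebra unfolding cstar_algebra_def by auto

lemma st_add [simp]: "st (x + y) = st x + st y"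
  using cstar_algebra unfolding cstar_algebra_def by auto

lemma st_mult [simp]: "st (x * y) = st y * st x"
  using cstar_algebra unfolding cstar_algebra_def by auto

lemma st_sc [simp]: "st (sc c x) = sc (cnj c) (st x)"
  using cstar_algebra unfolding cstar_algebra_def by auto

lemma norm_st_mult_self: "norm (st x * x) = (norm x)\<^sup>2"
  using cstar_algebra unfolding cstar_algebra_def by auto

lemma sc_of_real: "sc (complex_of_real r) x = r *\<^sub>R x"
  using cstar_algebra unfolding cstar_algebra_def by auto

lemma sc_add_left: "sc (c + d) x = sc c x + sc d x"
  using cstar_algebra unfolding cstar_algebra_def by auto

lemma sc_sc: "sc c (sc d x) = sc (c * d) x"
  using cstar_algebra unfolding cstar_algebra_def by auto

lemma sc_mult_left: "sc c x * y = sc c (x * y)"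
  using cstar_algebra unfolding cstar_algebra_def by metis

lemma sc_mult_right: "x * sc c y = sc c (x * y)"
  using cstar_algebra unfolding cstar_algebra_def by metis

lemma norm_sc: "norm (sc c x) = cmod c * norm x"
  using cstar_algebra unfolding cstar_algebra_def by auto

lemma st_0 [simp]: "st 0 = 0"
  by (metis add_cancel_right_right st_add)

lemma st_minus [simp]: "st (- x) = - st x"
  by (metis add_eq_0_iff st_0 st_add add.right_inverse)

lemma st_diff [simp]: "st (x - y) = st x - st y"
  by (metis diff_conv_add_uminus st_add st_minus)

lemma st_scaleR [simp]: "st (r *\<^sub>R x) = r *\<^sub>R st x"
  by (metis sc_of_real st_sc complex_cnj_complex_of_real)

lemma norm_st [simp]: "norm (st x) = norm x"
proof -
  have "(norm (st x))\<^sup>2 = (norm x)\<^sup>2"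
    using norm_st_mult_self[of "st x"] norm_st_mult_self[of x] by (simp add: mult_commute[of x])
  then show ?thesis by (simp add: power2_eq_iff_nonneg)
qed

lemma sc_1 [simp]: "sc 1 x = x"
  using sc_of_real[of 1 x] by simp

lemma sc_minus_left: "sc (- c) x = - sc c x"
  using sc_add_left[of c "- c" x] sc_of_real[of 0 x] by (simp add: add_eq_0_iff)

lemma sc_minus_right: "sc c (- x) = - sc c x"
  using sc_sc[of c "- 1" x] by (simp add: sc_minus_left)

definition re_part :: "'a \<Rightarrow> 'a" where
  "re_part v = (1/2) *\<^sub>R (v + st v)"

definition im_part :: "'a \<Rightarrow> 'a" where
  "im_part v = sc (- \<i>) ((1/2) *\<^sub>R (v - st v))"

lemma st_re_part [simp]: "st (re_part v) = re_part v"
  by (simp add: re_part_def add.commute)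

lemma st_im_part [simp]: "st (im_part v) = im_part v"
proof -
  have "(1/2) *\<^sub>R (st v - v) = - ((1/2) *\<^sub>R (v - st v))"
    by (simp add: algebra_simps)
  then show ?thesis
    by (simp add: im_part_def sc_minus_left sc_minus_right)
qed

lemma st_mult_self_eq_re_im: "st v * v = re_part v * re_part v + im_part v * im_part v"
proof -
  have re: "re_part v * re_part v = (1/4) *\<^sub>R ((v + st v) * (v + st v))"
    by (simp add: re_part_def)
  have "im_part v * im_part v = sc (- 1) ((1/2) *\<^sub>R (v - st v) * (1/2) *\<^sub>R (v - st v))"
    unfolding im_part_def sc_mult_left sc_mult_right sc_sc by simp
  then have im: "im_part v * im_part v = - ((1/4) *\<^sub>R ((v - st v) * (v - st v)))"
    by (simp add: sc_minus_left)
  have "(v + st v) * (v + st v) - (v - st v) * (v - st v) = 4 *\<^sub>R (st v * v)"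
    using scaleR_add_left[of 2 2 "st v * v"]
    by (simp add: algebra_simps mult_commute[of v "st v"] scaleR_2)
  then show ?thesis
    unfolding re im by (simp flip: scaleR_diff_right)
qed

lemma norm_re_part_le: "norm (re_part v) \<le> norm v"
  using norm_triangle_ineq[of v "st v"] by (simp add: re_part_def)

lemma norm_im_part_le: "norm (im_part v) \<le> norm v"
  using norm_triangle_ineq4[of v "st v"] by (simp add: im_part_def norm_sc)

lemma re_im_part_self_adjoint_combination:
  assumes "st b = b" "st h = h"
  shows "re_part (b + sc \<i> h) = b" "im_part (b + sc \<i> h) = h"
proof -
  have st_z: "st (b + sc \<i> h) = b - sc \<i> h"
    using assms by (simp add: sc_minus_left)
  show "re_part (b + sc \<i> h) = b"
    unfolding re_part_def st_z by (simp add: scaleR_2)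
  have "sc (- \<i>) (sc \<i> h) = h"
    by (simp add: sc_sc)
  then show "im_part (b + sc \<i> h) = h"
    unfolding im_part_def st_z by (simp add: scaleR_2)
qed

lemma norm_square_le_norm_sum_squares:
  assumes "st b = b" "st h = h"
  shows "(norm b)\<^sup>2 \<le> norm (b * b + h * h)"
proof -
  define z where "z = b + sc \<i> h"
  have "(norm b)\<^sup>2 \<le> (norm z)\<^sup>2"
    using norm_re_part_le[of z] re_im_part_self_adjoint_combination[OF assms]
    by (simp add: z_def power_mono)
  also have "\<dots> = norm (b * b + h * h)"
    using norm_st_mult_self[of z] st_mult_self_eq_re_im[of z]
      re_im_part_self_adjoint_combination[OF assms] by (simp add: z_def)
  finally show ?thesis .
qed

section \<open>Projections and the Loewner order\<close>

lemma norm_projection_le_1: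
  assumes "is_projection st g"
  shows "norm g \<le> 1"
proof -
  have "(norm g)\<^sup>2 = norm g"
    using norm_st_mult_self[of g] assms by (simp add: is_projection_def)
  then have "norm g = 0 \<or> norm g = 1"
    by (simp add: power2_eq_square)
  then show ?thesis by auto
qed

lemma unique_fixed_point_half_sum_square:
  fixes a :: 'a
  assumes \<rho>: "0 \<le> \<rho>" "\<rho> < 1" and a: "norm a \<le> 2 * \<rho> - \<rho>\<^sup>2"
  shows "\<exists>!c \<in> cball 0 \<rho>. (1/2) *\<^sub>R (a + c * c) = c"
proof -
  define T where "T c = (1/2) *\<^sub>R (a + c * c)" for c
  have "T ` cball 0 \<rho> \<subseteq> cball 0 \<rho>"
  proof clarsimp
    fix x :: 'a assume x: "norm x \<le> \<rho>"
    have "norm (x * x) \<le> \<rho>\<^sup>2"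
      by (metis x norm_mult_ineq norm_ge_zero mult_mono power2_eq_square order_trans)
    then show "norm (T x) \<le> \<rho>"
      using norm_triangle_ineq[of a "x * x"] a by (simp add: T_def)
  qed
  moreover have "dist (T x) (T y) \<le> \<rho> * dist x y" if "x \<in> cball 0 \<rho>" "y \<in> cball 0 \<rho>" for x y
  proof -
    have "T x - T y = (1/2) *\<^sub>R ((x + y) * (x - y))"
      unfolding T_def by (simp add: algebra_simps mult_commute)
    then have "dist (T x) (T y) \<le> (1/2) * (norm (x + y) * norm (x - y))"
      by (simp add: dist_norm norm_mult_ineq)
    also have "\<dots> \<le> (1/2) * ((2 * \<rho>) * norm (x - y))"
      using that norm_triangle_ineq[of x y] by (intro mult_left_mono mult_right_mono) auto
    finally show ?thesis
      by (simp add: dist_norm)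
  qed
  ultimately have "\<exists>!c \<in> cball 0 \<rho>. T c = c"
    using \<rho> by (intro Banach_fix) (auto simp: complete_eq_closed)
  then show ?thesis
    by (simp add: T_def)
qed

lemma self_adjoint_sqrt_projection_minus:
  assumes g: "is_projection st g" and a: "st a = a" "a * g = a" "norm a < 1"
  shows "\<exists>b. st b = b \<and> b * b = g - a"
proof -
  \<comment> \<open>The square root is g - c for the fixed point c = (a + c^2) / 2 of T in the ball of
    radius \<rho>, where 2 \<rho> - \<rho>^2 = \<parallel>a\<parallel>.\<close>
  define \<rho> where "\<rho> = 1 - sqrt (1 - norm a)"
  have \<rho>: "0 \<le> \<rho>" "\<rho> < 1" "norm a \<le> 2 * \<rho> - \<rho>\<^sup>2"
    using a(3) by (auto simp: \<rho>_def power2_eq_square algebra_simps)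
  define T where "T c = (1/2) *\<^sub>R (a + c * c)" for c
  have "\<exists>!c \<in> cball 0 \<rho>. T c = c"
    using unique_fixed_point_half_sum_square[OF \<rho>] by (simp only: T_def)
  then obtain c where c: "c \<in> cball 0 \<rho>" "T c = c"
    and unique: "\<And>x. x \<in> cball 0 \<rho> \<Longrightarrow> T x = x \<Longrightarrow> x = c"
    by blast
  \<comment> \<open>T commutes with st and with right multiplication by g, so by uniqueness st c = c and c g = c.\<close>
  have "st c = c"
  proof (rule unique)
    have "T (st c) = st (T c)"
      using a(1) by (simp add: T_def)
    then show "T (st c) = st c"
      using c(2) by simp
  qed (use c in simp)
  moreover have "c * g = c"
  proof (rule unique)
    show "c * g \<in> cball 0 \<rho>"
      using c(1) norm_mult_ineq[of c g] mult_left_le[OF norm_projection_le_1[OF g] norm_ge_zero[of c]]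
      by simp
    have "c * g * (c * g) = c * c * g"
      using g by (simp add: mult.assoc mult_left_commute[of g c] is_projection_def)
    then have "T (c * g) = T c * g"
      using a(2) by (simp add: T_def algebra_simps)
    then show "T (c * g) = c * g"
      using c(2) by simp
  qed
  moreover have "c + c = a + c * c"
    using c(2) unfolding T_def by (metis scaleR_2 scaleR_left_commute scaleR_one field_sum_of_halves scaleR_add_left)
  ultimately have "st (g - c) = g - c \<and> (g - c) * (g - c) = g - a"
    using g by (simp add: algebra_simps mult_commute is_projection_def)
  then show ?thesis ..
qed

lemma im_part_mult_self_adjoint:
  assumes "st g = g"
  shows "im_part (v * g) = im_part v * g"
  using assms by (simp add: im_part_def sc_mult_left algebra_simps mult_commute[of g])

lemma mult_sqr_le_one_minus_if_neg_projection_sum_squares: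
  assumes g: "is_projection st g" and h: "st h = h" and k: "st k = k" "k * g = k" "norm (k * k) \<le> 1"
    and hk: "h * h + k * k = - g" and t: "0 < t" "t < 1"
  shows "t * (norm h)\<^sup>2 \<le> 1 - t"
proof -
  have "norm (- (t *\<^sub>R (k * k))) \<le> t"
    using t k(3) by (simp add: mult_left_le)
  then have "norm (- (t *\<^sub>R (k * k))) < 1"
    using t by linarith
  then obtain b where b: "st b = b" and bb: "b * b = g + t *\<^sub>R (k * k)"
    using self_adjoint_sqrt_projection_minus[OF g, of "- (t *\<^sub>R (k * k))"] k t
    by (auto simp: mult.assoc)
  define h' where "h' = sqrt t *\<^sub>R h"
  have "h' * h' + b * b = (1 - t) *\<^sub>R g"
    using bb hk t by (simp add: h'_def algebra_simps flip: scaleR_add_right)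
  then have "(norm h')\<^sup>2 \<le> norm ((1 - t) *\<^sub>R g)"
    using norm_square_le_norm_sum_squares[of h' b] b h by (simp add: h'_def)
  also have "\<dots> \<le> 1 - t"
    using t norm_projection_le_1[OF g] by (simp add: mult_left_le)
  finally show ?thesis
    using t by (simp add: h'_def power_mult_distrib)
qed

lemma projection_eq_0_if_st_mult_self_eq_neg:
  assumes g: "is_projection st g" and v: "st v * v = - g"
  shows "g = 0"
proof -
  have sg: "st g = g" and gg: "g * g = g"
    using g by (auto simp: is_projection_def)
  \<comment> \<open>Cutting v down to v g makes its imaginary part k satisfy k g = k.\<close>
  define w where "w = v * g"
  have "st w * w = (st v * v) * (g * g)"
    unfolding w_def by (simp add: sg mult_commute mult_left_commute mult.assoc)
  then have w: "st w * w = - g"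
    using v gg by simp
  define h k where "h = re_part w" and "k = im_part w"
  have hk: "h * h + k * k = - g"
    using st_mult_self_eq_re_im[of w] w by (simp add: h_def k_def)
  have kg: "k * g = k"
    using im_part_mult_self_adjoint[OF sg, of w] by (simp add: k_def w_def mult.assoc gg)
  have "norm w \<le> 1"
    using norm_st_mult_self[of w] w norm_projection_le_1[OF g] by (simp add: power_le_one_iff)
  then have "norm (k * k) \<le> 1"
    using norm_im_part_le[of w] norm_mult_ineq[of k k] unfolding k_def
    by (metis mult_le_one norm_ge_zero order_trans)
  then have "(norm h)\<^sup>2 \<le> 0"
    using mult_sqr_le_one_minus_if_neg_projection_sum_squares[OF g _ _ kg _ hk]
    by (intro le_0_if_mult_le_1_minus) (simp add: h_def k_def)
  then have "g * g + k * k = 0"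
    using hk gg by simp
  then have "(norm g)\<^sup>2 \<le> 0"
    using norm_square_le_norm_sum_squares[OF sg, of k] by (simp add: k_def)
  then show "g = 0" by simp
qed

lemma loewner_le_projection_iff:
  assumes p: "is_projection st p" and q: "is_projection st q"
  shows "loewner_le st p q \<longleftrightarrow> p * q = p"
proof
  have sp: "st p = p" and pp: "p * p = p" and sq: "st q = q" and qq: "q * q = q"
    using p q by (auto simp: is_projection_def)
  {
    assume "p * q = p"
    then have "st (q - p) * (q - p) = q - p"
      using sp sq pp qq by (simp add: algebra_simps mult_commute[of q p])
    then show "loewner_le st p q"
      unfolding loewner_le_def by metis
  next
    assume "loewner_le st p q"
    then obtain y where y: "q - p = st y * y"
      unfolding loewner_le_def by blast
    \<comment> \<open>Compressing q - p = y^* y by the part g of p outside q yields - g.\<close>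
    define g where "g = p - p * q"
    have g: "is_projection st g"
      using sp sq pp qq
      by (simp add: g_def is_projection_def algebra_simps mult_commute[of q p] mult.assoc[symmetric])
    have "p * (p * q) = p * q"
      by (simp add: mult.assoc[symmetric] pp)
    then have gq: "g * q = 0" and gp: "g * p = g"
      using pp qq by (simp_all add: g_def algebra_simps mult_commute[of q p] mult.assoc)
    have "st (y * g) * (y * g) = g * (q - p) * g"
      using g by (simp add: y is_projection_def mult.assoc)
    also have "\<dots> = - g"
      using g gq gp by (simp add: algebra_simps mult_commute[of g q] is_projection_def)
    finally have "g = 0"
      by (rule projection_eq_0_if_st_mult_self_eq_neg[OF g])
    then show "p * q = p"
      by (simp add: g_def)
  }
qed

lemma loewner_le_projection_antisym:
  assumes "is_projection st p" "is_projection st q" "loewner_le st p q" "loewner_le st q p"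
  shows "p = q"
  using assms loewner_le_projection_iff mult_commute by metis

lemma is_projection_mult:
  assumes "is_projection st p" "is_projection st q"
  shows "is_projection st (p * q)"
proof -
  have "p * q * (p * q) = (p * p) * (q * q)"
    by (simp add: mult.assoc mult_left_commute[of q p])
  then show ?thesis
    using assms by (simp add: is_projection_def mult_commute[of q p])
qed

lemma is_projection_join:
  assumes p: "is_projection st p" and q: "is_projection st q"
  shows "is_projection st (p + q - p * q)" and "p * (p + q - p * q) = p" and "q * (p + q - p * q) = q"
proof -
  have sp: "st p = p" and pp: "p * p = p" and sq: "st q = q" and qq: "q * q = q"
    using p q by (auto simp: is_projection_def)
  have "p * (p * q) = p * q"
    by (simp add: mult.assoc[symmetric] pp)
  then show pj: "p * (p + q - p * q) = p"
    using pp by (simp add: ring_distribs)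
  have "q * (p * q) = p * q"
    using mult_left_commute[of q p q] qq by simp
  then show qj: "q * (p + q - p * q) = q"
    using qq by (simp add: ring_distribs mult_commute[of q p])
  have "(p + q - p * q) * (p + q - p * q) = p * (p + q - p * q) + q * (p + q - p * q) - p * (q * (p + q - p * q))"
    by (simp add: ring_distribs mult.assoc)
  then show "is_projection st (p + q - p * q)"
    using pj qj sp sq by (simp add: is_projection_def mult_commute[of q p])
qed

lemma join_mult_eq:
  assumes "p * r = p" "q * (r::'a) = q"
  shows "(p + q - p * q) * r = p + q - p * q"
proof -
  have "(p + q - p * q) * r = p * r + q * r - p * (q * r)"
    by (simp add: algebra_simps)
  then show ?thesis
    using assms by simp
qed

lemma proj_Inf_eqI:
  assumes S: "\<forall>s\<in>S. is_projection st s" and m: "is_projection st m" "\<And>s. s \<in> S \<Longrightarrow> m * s = m"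
    and greatest: "\<And>r. is_projection st r \<Longrightarrow> (\<And>s. s \<in> S \<Longrightarrow> r * s = r) \<Longrightarrow> r * m = r"
  shows "proj_Inf st S = m"
  unfolding proj_Inf_def
proof (rule the_equality)
  show glb: "is_proj_glb st S m"
    unfolding is_proj_glb_def
  proof (intro conjI allI impI ballI)
    fix s assume "s \<in> S"
    then show "loewner_le st m s"
      using loewner_le_projection_iff[OF m(1)] S m(2) by blast
  next
    fix r assume r: "is_projection st r \<and> (\<forall>s\<in>S. loewner_le st r s)"
    then have "r * s = r" if "s \<in> S" for s
      using loewner_le_projection_iff S that by blast
    then show "loewner_le st r m"
      using loewner_le_projection_iff[of r m] r m(1) greatest by blast
  qed (fact m(1))
  show "m' = m" if "is_proj_glb st S m'" for m'
    using that glb m(1) loewner_le_projection_antisym unfolding is_proj_glb_def by blast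
qed

lemma proj_sup_eq:
  assumes p: "is_projection st p" and q: "is_projection st q"
  shows "proj_sup st p q = p + q - p * q"
  unfolding proj_sup_def
proof (rule the_equality)
  define j where "j = p + q - p * q"
  have j: "is_projection st j" "p * j = p" "q * j = q"
    using is_projection_join[OF p q] by (simp_all add: j_def)
  show lub: "is_proj_lub st {p, q} j"
    unfolding is_proj_lub_def
  proof (intro conjI allI impI ballI)
    fix s assume "s \<in> {p, q}"
    then show "loewner_le st s j"
      using loewner_le_projection_iff[OF _ j(1)] p q j(2,3) by blast
  next
    fix r assume r: "is_projection st r \<and> (\<forall>s\<in>{p, q}. loewner_le st s r)"
    then have "p * r = p" "q * r = q"
      using loewner_le_projection_iff p q by blast+
    then show "loewner_le st j r"
      using loewner_le_projection_iff[of j r] r j(1) join_mult_eq unfolding j_def by blast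
  qed (fact j(1))
  show "j' = j" if "is_proj_lub st {p, q} j'" for j'
    using that lub j(1) loewner_le_projection_antisym unfolding is_proj_lub_def by blast
qed

end

section \<open>Abelian AW*-algebras\<close>

locale abelian_aw_star =
  fixes sc :: "complex \<Rightarrow> 'a::{real_normed_algebra,banach} \<Rightarrow> 'a" and st :: "'a \<Rightarrow> 'a"
  assumes abelian_aw_star_algebra: "abelian_aw_star_algebra sc st"

sublocale abelian_aw_star \<subseteq> commutative_cstar
  using abelian_aw_star_algebra
  by unfold_locales (auto simp: abelian_aw_star_algebra_def aw_star_algebra_def)

context abelian_aw_star
begin

lemma right_annihilator_projection:
  assumes "S \<noteq> {}"
  obtains p where "is_projection st p" "\<And>x. (\<forall>s\<in>S. s * x = 0) \<longleftrightarrow> p * x = x"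
proof -
  have "aw_star_algebra sc st"
    using abelian_aw_star_algebra by (simp add: abelian_aw_star_algebra_def)
  then have "\<exists>p. is_projection st p \<and> {x. \<forall>s\<in>S. s * x = 0} = {p * y | y. True}"
    using assms unfolding aw_star_algebra_def by (elim conjE allE[of _ S]) simp
  then obtain p where p: "is_projection st p" and ann: "{x. \<forall>s\<in>S. s * x = 0} = {p * y | y. True}"
    by (elim exE conjE)
  have "(\<forall>s\<in>S. s * x = 0) \<longleftrightarrow> p * x = x" for x
  proof -
    have "(\<forall>s\<in>S. s * x = 0) \<longleftrightarrow> (\<exists>y. x = p * y)"
      using ann by (simp add: set_eq_iff)
    also have "\<dots> \<longleftrightarrow> p * x = x"
      using p by (metis is_projection_def mult.assoc)
    finally show ?thesis .
  qed
  with p show ?thesis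
    by (rule that)
qed

definition aw_unit :: 'a where
  "aw_unit = (THE e. \<forall>x. e * x = x)"

lemma aw_unit_mult [simp]: "aw_unit * x = x"
  and mult_aw_unit [simp]: "x * aw_unit = x"
  and is_projection_aw_unit: "is_projection st aw_unit"
proof -
  obtain e where e: "is_projection st e" "\<And>x. (\<forall>s\<in>{0}. s * x = 0) \<longleftrightarrow> e * x = x"
    by (rule right_annihilator_projection[of "{0}"]) simp_all
  have "aw_unit = e"
    unfolding aw_unit_def
  proof (rule the_equality)
    show "\<forall>x. e * x = x"
      using e(2) by simp
    show "e' = e" if "\<forall>x. e' * x = x" for e'
      using that e(2)[of e'] mult_commute[of e e'] by simp
  qed
  then show "aw_unit * x = x" "x * aw_unit = x" "is_projection st aw_unit"
    using e mult_commute[of x e] by simp_all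
qed

lemma is_projection_complement:
  assumes "is_projection st p"
  shows "is_projection st (aw_unit - p)"
  using assms is_projection_aw_unit by (simp add: is_projection_def algebra_simps)

lemma mult_complement_eq_0_iff: "x * (aw_unit - y) = 0 \<longleftrightarrow> x * y = x"
  by (metis mult_aw_unit right_diff_distrib right_minus_eq)

lemma complement_join: "aw_unit - (p + q - p * q) = (aw_unit - p) * (aw_unit - q)"
  by (simp add: algebra_simps)

lemma complement_mult_complement:
  assumes "p * q = p"
  shows "(aw_unit - p) * (aw_unit - q) = aw_unit - q"
  using assms by (simp add: algebra_simps)

lemma proj_Inf:
  assumes S: "\<forall>s\<in>S. is_projection st s"
  shows "is_projection st (proj_Inf st S)"
    and "\<And>s. s \<in> S \<Longrightarrow> proj_Inf st S * s = proj_Inf st S"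
    and "\<And>r. is_projection st r \<Longrightarrow> (\<And>s. s \<in> S \<Longrightarrow> r * s = r) \<Longrightarrow> r * proj_Inf st S = r"
proof -
  \<comment> \<open>The infimum is the support of the right annihilator of the complements of S
    (0 is added only to make that set nonempty).\<close>
  obtain m where m: "is_projection st m"
    and ann: "\<And>x. (\<forall>t\<in>insert 0 ((\<lambda>s. aw_unit - s) ` S). t * x = 0) \<longleftrightarrow> m * x = x"
    by (rule right_annihilator_projection[of "insert 0 ((\<lambda>s. aw_unit - s) ` S)"]) (simp, rule that)
  have below_iff: "(\<forall>s\<in>S. x * s = x) \<longleftrightarrow> x * m = x" for x
    using ann[of x] by (simp add: mult_commute[of _ x] mult_complement_eq_0_iff)
  have lower: "m * s = m" if "s \<in> S" for s
    using below_iff[of m] m that by (simp add: is_projection_def)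
  have greatest: "r * m = r" if "\<And>s. s \<in> S \<Longrightarrow> r * s = r" for r
    using below_iff[of r] that by blast
  have "proj_Inf st S = m"
    using proj_Inf_eqI[OF S m lower greatest] .
  then show "is_projection st (proj_Inf st S)"
    and "\<And>s. s \<in> S \<Longrightarrow> proj_Inf st S * s = proj_Inf st S"
    and "\<And>r. is_projection st r \<Longrightarrow> (\<And>s. s \<in> S \<Longrightarrow> r * s = r) \<Longrightarrow> r * proj_Inf st S = r"
    using m lower greatest by simp_all
qed

lemma mult_complement_proj_Inf_eq_0:
  assumes S: "\<forall>s\<in>S. is_projection st s" and x: "is_projection st x"
    and below: "\<And>s. s \<in> S \<Longrightarrow> x * (aw_unit - s) = 0"
  shows "x * (aw_unit - proj_Inf st S) = 0"
  using proj_Inf(3)[OF S x] below by (simp add: mult_complement_eq_0_iff)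

lemma complements_mult_eq_0_if_le_joins:
  fixes p q :: "'i::linorder \<Rightarrow> 'a" and I :: "'i set"
  assumes p_mono: "\<And>l m. l \<in> I \<Longrightarrow> m \<in> I \<Longrightarrow> l \<le> m \<Longrightarrow> p l * p m = p l"
    and q_mono: "\<And>l m. l \<in> I \<Longrightarrow> m \<in> I \<Longrightarrow> l \<le> m \<Longrightarrow> q l * q m = q l"
    and below: "\<And>l. l \<in> I \<Longrightarrow> r * (p l + q l - p l * q l) = r"
    and lm: "l \<in> I" "m \<in> I"
  shows "r * (aw_unit - p l) * (aw_unit - q m) = 0"
proof -
  let ?c = "\<lambda>x. aw_unit - x"
  define n where "n = min l m"
  have n: "n \<in> I" "n \<le> l" "n \<le> m"
    using lm by (auto simp: n_def min_def)
  have below_n: "r * ?c (p n) * ?c (q n) = 0"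
    using below[OF n(1)] by (simp add: mult.assoc flip: complement_join mult_complement_eq_0_iff)
  have "r * ?c (p l) * ?c (q m) = r * (?c (p n) * ?c (p l)) * (?c (q n) * ?c (q m))"
    using p_mono[OF n(1) lm(1) n(2)] q_mono[OF n(1) lm(2) n(3)]
    by (simp add: complement_mult_complement)
  also have "\<dots> = (r * ?c (p n) * ?c (q n)) * (?c (p l) * ?c (q m))"
    by (simp add: mult.assoc mult_left_commute)
  finally show ?thesis
    using below_n by simp
qed

lemma le_join_proj_Inf_if_le_joins:
  fixes p q :: "'i::linorder \<Rightarrow> 'a" and I :: "'i set"
  assumes p: "\<forall>l\<in>I. is_projection st (p l)" and q: "\<forall>l\<in>I. is_projection st (q l)"
    and p_mono: "\<And>l m. l \<in> I \<Longrightarrow> m \<in> I \<Longrightarrow> l \<le> m \<Longrightarrow> p l * p m = p l"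
    and q_mono: "\<And>l m. l \<in> I \<Longrightarrow> m \<in> I \<Longrightarrow> l \<le> m \<Longrightarrow> q l * q m = q l"
    and r: "is_projection st r" and below: "\<And>l. l \<in> I \<Longrightarrow> r * (p l + q l - p l * q l) = r"
  defines "P \<equiv> proj_Inf st (p ` I)" and "Q \<equiv> proj_Inf st (q ` I)"
  shows "r * (P + Q - P * Q) = r"
proof -
  let ?c = "\<lambda>x. aw_unit - x"
  have "r * ?c (q m) * ?c P = 0" if m: "m \<in> I" for m
  proof -
    have "is_projection st (r * ?c (q m))"
      using r q m by (simp add: is_projection_mult is_projection_complement)
    moreover have "r * ?c (q m) * ?c s = 0" if "s \<in> p ` I" for s
      using complements_mult_eq_0_if_le_joins[OF p_mono q_mono below _ m] that
      by (auto simp: mult.assoc mult_commute[of "?c (q m)"])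
    ultimately show ?thesis
      using mult_complement_proj_Inf_eq_0[of "p ` I"] p by (simp add: P_def)
  qed
  then have "r * ?c P * ?c Q = 0"
  proof -
    have "is_projection st (r * ?c P)"
      using r proj_Inf(1)[of "p ` I"] p by (simp add: P_def is_projection_mult is_projection_complement)
    moreover have "r * ?c P * ?c s = 0" if "s \<in> q ` I" for s
      using \<open>\<And>m. m \<in> I \<Longrightarrow> r * ?c (q m) * ?c P = 0\<close> that
      by (auto simp: mult.assoc mult_commute[of "?c P"])
    ultimately show ?thesis
      using mult_complement_proj_Inf_eq_0[of "q ` I"] q by (simp add: Q_def)
  qed
  then show ?thesis
    by (simp add: mult.assoc flip: complement_join mult_complement_eq_0_iff)
qed

lemma proj_Inf_join_increasing:
  fixes p q :: "'i::linorder \<Rightarrow> 'a" and I :: "'i set"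
  assumes p: "\<forall>l\<in>I. is_projection st (p l)" and q: "\<forall>l\<in>I. is_projection st (q l)"
    and p_mono: "\<forall>l\<in>I. \<forall>m\<in>I. l \<le> m \<longrightarrow> loewner_le st (p l) (p m)"
    and q_mono: "\<forall>l\<in>I. \<forall>m\<in>I. l \<le> m \<longrightarrow> loewner_le st (q l) (q m)"
  shows "proj_Inf st ((\<lambda>l. proj_sup st (p l) (q l)) ` I) =
         proj_sup st (proj_Inf st (p ` I)) (proj_Inf st (q ` I))"
proof -
  define P Q where "P = proj_Inf st (p ` I)" and "Q = proj_Inf st (q ` I)"
  have P: "is_projection st P" and Q: "is_projection st Q"
    using proj_Inf(1) p q by (auto simp: P_def Q_def)
  have joins: "(\<lambda>l. proj_sup st (p l) (q l)) ` I = (\<lambda>l. p l + q l - p l * q l) ` I"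
    using proj_sup_eq p q by simp
  have "proj_Inf st ((\<lambda>l. p l + q l - p l * q l) ` I) = P + Q - P * Q"
  proof (rule proj_Inf_eqI)
    show "\<forall>s\<in>(\<lambda>l. p l + q l - p l * q l) ` I. is_projection st s"
      using is_projection_join p q by auto
    show "is_projection st (P + Q - P * Q)"
      using is_projection_join P Q by blast
    show "(P + Q - P * Q) * s = P + Q - P * Q" if join: "s \<in> (\<lambda>l. p l + q l - p l * q l) ` I" for s
    proof -
      obtain l where l: "l \<in> I" and s: "s = p l + q l - p l * q l"
        using join by blast
      have "P * s = P"
        using proj_Inf(2)[of "p ` I" "p l"] is_projection_join(2)[of "p l" "q l"] p q l
        by (simp add: P_def s) (metis mult.assoc)
      moreover have "Q * s = Q"
        using proj_Inf(2)[of "q ` I" "q l"] is_projection_join(3)[of "p l" "q l"] p q l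
        by (simp add: Q_def s) (metis mult.assoc)
      ultimately show ?thesis
        by (rule join_mult_eq)
    qed
    show "r * (P + Q - P * Q) = r"
      if "is_projection st r" "\<And>s. s \<in> (\<lambda>l. p l + q l - p l * q l) ` I \<Longrightarrow> r * s = r" for r
      using le_join_proj_Inf_if_le_joins[OF p q _ _ that(1)] that(2) p q p_mono q_mono loewner_le_projection_iff
      by (simp add: P_def Q_def)
  qed
  then show ?thesis
    using joins proj_sup_eq P Q by (simp add: P_def Q_def)
qed

end

theorem lemma2p1:
  fixes sc :: "complex \<Rightarrow> 'a::{real_normed_algebra,banach} \<Rightarrow> 'a"
    and st :: "'a \<Rightarrow> 'a"
    and I :: "real set"
    and p q :: "real \<Rightarrow> 'a"
  assumes "abelian_aw_star_algebra sc st"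
    and "is_interval I"
    and "\<forall>l\<in>I. is_projection st (p l)"
    and "\<forall>l\<in>I. is_projection st (q l)"
    and "\<forall>l\<in>I. \<forall>m\<in>I. l \<le> m \<longrightarrow> loewner_le st (p l) (p m)"
    and "\<forall>l\<in>I. \<forall>m\<in>I. l \<le> m \<longrightarrow> loewner_le st (q l) (q m)"
  shows "proj_Inf st ((\<lambda>l. proj_sup st (p l) (q l)) ` I) =
         proj_sup st (proj_Inf st (p ` I)) (proj_Inf st (q ` I))"
proof -
  interpret abelian_aw_star sc st
    by (rule abelian_aw_star.intro) (fact assms(1))
  \<comment> \<open>Only the total order of the index set matters.\<close>
  show ?thesis
    by (rule proj_Inf_join_increasing) (fact assms(3-6))+
qed

end
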